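(* Assume the Composite Assumption (see context) and let $\lambda>0$. Then for all $(x_1,y),(x_2,y),(x,y_1),(x,y_2)\in\mathcal X\times\mathcal Y$, $$\mathbb E\|\nabla_xf^\lambda(x_1,y;\xi)-\nabla_xf^\lambda(x_2,y;\xi)\|^2\le L_{\lambda,x}^2\|x_1-x_2\|^2,\qquad \mathbb E\|\nabla_xf^\lambda(x,y_1;\xi)-\nabla_xf^\lambda(x,y_2;\xi)\|^2\le L_{\lambda,y}^2\|y_1-y_2\|^2,$$ and for all $(x_1,y_1),(x_2,y_2)\in\mathcal X\times\mathcal Y$, $$\mathbb E\|\nabla_yf^\lambda(x_1,y_1;\xi)-\nabla_yf^\lambda(x_2,y_2;\xi)\|^2\le L_{\lambda,y}^2(\|x_1-x_2\|^2+\|y_1-y_2\|^2),$$ where $L_{\lambda,x}=\sqrt{\frac{3\ell_c^4\ell_\varphi^2d_h}{\lambda^2}+3d_h\ell_h^2\ell_\varphi^2L_c^2+3\ell_c^4d_h^2\ell_h^4L_\varphi^2}$ and $L_{\lambda,y}=\max\{\sqrt{d_h}L_\varphi\ell_h\ell_c,L_\varphi\}$.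
   Context: Let $\mathcal X\subseteq\mathbb R^{d_x}$, $\mathcal Y\subseteq\mathbb R^{d_y}$ be nonempty closed convex sets and $\mathbb P$ a distribution with support $\Xi$; expectations are over $\xi\sim\mathbb P$. Let $f(x,y;\xi)=\varphi(h(c(x;\xi)),y;\xi)$ with $\varphi:\mathbb R^{d_h}\times\mathbb R^{d_y}\times\Xi\to\mathbb R$, $h=(h_1,\dots,h_{d_h}):\mathbb R^{d_c}\to\mathbb R^{d_h}$, $c:\mathbb R^{d_x}\times\Xi\to\mathbb R^{d_c}$, with $\varphi$ and $c$ differentiable. Composite Assumption: (i) $\mathcal X$ compact with diameter $D_{\mathcal X}$; (ii) $\mathcal Y$ compact with diameter $D_{\mathcal Y}$; (iii) each $c(\cdot;\xi)$ is $\ell_c$-Lipschitz; (iv) each $h_j$ is convex and $\ell_h$-Lipschitz; (v) each $\varphi(\cdot,\cdot;\xi)$ is nondecreasing in its first argument and $\ell_\varphi$-Lipschitz; (vi) $\mathbb E\|\nabla_xc(x_1;\xi)-\nabla_xc(x_2;\xi)\|^2\le L_c^2\|x_1-x_2\|^2$ for all $x_1,x_2$; (vii) for all $u_i\in\mathbb R^{d_h}$, $y_i\in\mathbb R^{d_y}$, $\xi$: $\|\nabla_1\varphi(u_1,y_1;\xi)-\nabla_1\varphi(u_2,y_2;\xi)\|^2\le L_\varphi^2(\|u_1-u_2\|^2+\|y_1-y_2\|^2)$ and $\|\nabla_y\varphi(u_1,y_1;\xi)-\nabla_y\varphi(u_2,y_2;\xi)\|^2\le L_\varphi^2(\|u_1-u_2\|^2+\|y_1-y_2\|^2)$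 ($\nabla_1$ = gradient in first argument). Smoothing: $h^\lambda_j(w)=\min_{q\in\mathbb R^{d_c}}\{h_j(q)+\frac1{2\lambda}\|w-q\|^2\}$, $h^\lambda=(h^\lambda_1,\dots,h^\lambda_{d_h})$, $f^\lambda(x,y;\xi)=\varphi(h^\lambda(c(x;\xi)),y;\xi)$. *)

theory Defs
  imports "HOL-Analysis.Analysis" "HOL-Probability.Probability"
begin

definition grad :: "('a::real_inner \<Rightarrow> real) \<Rightarrow> 'a \<Rightarrow> 'a" where
  "grad f x = (THE g. (f has_derivative (\<lambda>v. g \<bullet> v)) (at x))"

definition moreau_env :: "real \<Rightarrow> ('a::real_normed_vector \<Rightarrow> real) \<Rightarrow> 'a \<Rightarrow> real" where
  "moreau_env lam g w = (INF q. g q + (norm (w - q))\<^sup>2 / (2 * lam))"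

definition smooth_h :: "real \<Rightarrow> ('h::finite \<Rightarrow> 'c::real_normed_vector \<Rightarrow> real) \<Rightarrow> 'c \<Rightarrow> real ^ 'h" where
  "smooth_h lam h w = (\<chi> j. moreau_env lam (h j) w)"

definition f_lam ::
  "real \<Rightarrow> (real ^ 'h \<Rightarrow> 'y \<Rightarrow> 'e \<Rightarrow> real) \<Rightarrow> ('h::finite \<Rightarrow> 'c::real_normed_vector \<Rightarrow> real)
   \<Rightarrow> ('x \<Rightarrow> 'e \<Rightarrow> 'c) \<Rightarrow> 'x \<Rightarrow> 'y \<Rightarrow> 'e \<Rightarrow> real" where
  "f_lam lam phi h c x y xi = phi (smooth_h lam h (c x xi)) y xi"

end

theory Submission
  imports Defs
begin

(* For convex l-Lipschitz g the Moreau envelope is differentiable with gradient (w - prox w) / lam;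
   this gradient is bounded by l and (1/lam)-Lipschitz.  By the chain rule,
   grad_x f^lam(x, y) . v = grad_1 phi(h^lam(c x), y) . (J(c x) (Dc(x) v)), where the rows of J are
   these envelope gradients.  Moving x changes each of the three factors; bounding the three resulting
   terms with the Lipschitz constants and using (a + b + c)^2 <= 3 (a^2 + b^2 + c^2) gives the
   x-estimate pointwise in the sample, and only the term with Dc(x1) - Dc(x2) needs the mean-square
   assumption on Dc when taking expectations.  The y-estimates only use the Lipschitz continuity of
   the gradients of phi and of h^lam o c. *)

lemma grad_eqI:
  fixes f :: "'a::real_inner \<Rightarrow> real"
  assumes "(f has_derivative (\<lambda>v. g \<bullet> v)) (at x)"
  shows "grad f x = g"
  unfolding grad_def
proof (rule the_equality)
  fix g' assume "(f has_derivative (\<lambda>v. g' \<bullet> v)) (at x)"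
  then have "(\<lambda>v. g \<bullet> v) = (\<lambda>v. g' \<bullet> v)" using has_derivative_unique assms by blast
  then have "(g - g') \<bullet> (g - g') = 0" by (metis inner_diff_left right_minus_eq)
  then show "g' = g" by simp
qed (fact assms)

lemma has_derivative_grad:
  fixes f :: "'a::euclidean_space \<Rightarrow> real"
  assumes "f differentiable (at x)"
  shows "(f has_derivative (\<lambda>v. grad f x \<bullet> v)) (at x)"
proof -
  obtain D where D: "(f has_derivative D) (at x)" using assms unfolding differentiable_def by blast
  \<comment> \<open>Riesz representation of the linear functional D\<close>
  have "D = (\<lambda>v. adjoint D 1 \<bullet> v)"
    using adjoint_works[OF has_derivative_linear[OF D], of _ 1] by (auto simp: inner_commute)
  with D show ?thesis using grad_eqI by metis
qed

lemma norm_le_if_inner_le: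
  fixes g :: "'a::real_inner"
  assumes "\<And>v. g \<bullet> v \<le> K * norm v" and "0 \<le> K"
  shows "norm g \<le> K"
proof (cases "g = 0")
  case False
  have "norm g * norm g \<le> K * norm g"
    using assms(1)[of g] by (simp add: power2_norm_eq_inner[symmetric] power2_eq_square)
  then show ?thesis using False by simp
qed (simp add: assms(2))

lemma has_derivative_norm_le_lipschitz:
  fixes f :: "'a::real_normed_vector \<Rightarrow> 'b::real_normed_vector"
  assumes f: "l-lipschitz_on UNIV f" and D: "(f has_derivative D) (at x)"
  shows "norm (D v) \<le> l * norm v"
proof -
  define g where "g t = f (x + t *\<^sub>R v)" for t :: real
  define q where "q t = norm (g t - g 0 - t *\<^sub>R D v) / norm t" for t :: real
  have "((\<lambda>t. x + t *\<^sub>R v) has_derivative (\<lambda>t. t *\<^sub>R v)) (at 0)"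
    by (auto intro!: derivative_eq_intros)
  moreover have "(f has_derivative D) (at ((\<lambda>t. x + t *\<^sub>R v) 0))" using D by simp
  ultimately have "(g has_derivative (\<lambda>t. D (t *\<^sub>R v))) (at 0)"
    unfolding g_def using diff_chain_at by (fastforce simp: o_def)
  then have "(q \<longlongrightarrow> 0) (at 0)"
    unfolding q_def has_derivative_at
    using linear_scale[OF has_derivative_linear[OF D]] by simp
  then have "((\<lambda>t. l * norm v + q t) \<longlongrightarrow> l * norm v + 0) (at 0)" by (intro tendsto_intros)
  moreover have "norm (D v) \<le> l * norm v + q t" if "t \<noteq> 0" for t
  proof -
    have "norm (t *\<^sub>R D v) \<le> norm (g t - g 0) + norm (g t - g 0 - t *\<^sub>R D v)"
      using norm_triangle_sub[of "t *\<^sub>R D v" "g t - g 0"]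
        norm_minus_commute[of "t *\<^sub>R D v" "g t - g 0"] by linarith
    also have "\<dots> \<le> \<bar>t\<bar> * (l * norm v) + norm (g t - g 0 - t *\<^sub>R D v)"
      using lipschitz_onD[OF f, of "x + t *\<^sub>R v" x] unfolding g_def by (simp add: dist_norm mult_ac)
    finally show ?thesis using that by (simp add: q_def divide_simps mult_ac)
  qed
  then have "\<forall>\<^sub>F t in at 0. norm (D v) \<le> l * norm v + q t" by (auto simp: eventually_at_filter)
  ultimately show ?thesis by (intro tendsto_lowerbound) (auto simp: trivial_limit_at)
qed

lemma norm_grad_le_lipschitz:
  fixes f :: "'a::euclidean_space \<Rightarrow> real"
  assumes f: "l-lipschitz_on UNIV f" and "f differentiable (at x)"
  shows "norm (grad f x) \<le> l"
proof (rule norm_le_if_inner_le)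
  fix v
  show "grad f x \<bullet> v \<le> l * norm v"
    using has_derivative_norm_le_lipschitz[OF f has_derivative_grad, of x v] assms(2) by simp
qed (rule lipschitz_on_nonneg[OF f])

lemma lipschitz_on_partial:
  assumes "l-lipschitz_on UNIV (\<lambda>p. \<Phi> (fst p) (snd p))"
  shows "l-lipschitz_on UNIV (\<lambda>u. \<Phi> u y)"
proof (rule lipschitz_onI)
  fix u1 u2
  show "dist (\<Phi> u1 y) (\<Phi> u2 y) \<le> l * dist u1 u2"
    using lipschitz_onD[OF assms, of "(u1, y)" "(u2, y)"] by (simp add: dist_Pair_Pair)
qed (rule lipschitz_on_nonneg[OF assms])

lemma differentiable_partial:
  assumes "(\<lambda>p. \<Phi> (fst p) (snd p)) differentiable (at (u, y))"
  shows "(\<lambda>u. \<Phi> u y) differentiable (at u)"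
proof -
  have "(\<lambda>u. (u, y)) differentiable (at u)"
    using has_derivative_Pair[OF has_derivative_ident has_derivative_const] unfolding differentiable_def by blast
  from differentiable_chain_at[OF this, of "\<lambda>p. \<Phi> (fst p) (snd p)"] assms show ?thesis by (simp add: o_def)
qed

lemma inner_le_of_norm_le:
  fixes a b :: "'a::real_inner"
  assumes "norm a \<le> \<alpha>" and "norm b \<le> \<beta>"
  shows "a \<bullet> b \<le> \<alpha> * \<beta>"
proof -
  have "a \<bullet> b \<le> norm a * norm b" by (rule norm_cauchy_schwarz)
  also have "\<dots> \<le> \<alpha> * \<beta>"
    using assms order_trans[OF norm_ge_zero assms(1)] by (intro mult_mono) auto
  finally show ?thesis .
qed

lemma norm_vec_le_sqrt_card:
  fixes x :: "real ^ 'n"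
  assumes "\<And>i. \<bar>x $ i\<bar> \<le> K"
  shows "norm x \<le> sqrt CARD('n) * K"
proof -
  have K: "0 \<le> K" using assms[of undefined] by simp
  have "(\<Sum>i\<in>UNIV. (x $ i)\<^sup>2) \<le> (\<Sum>i\<in>(UNIV::'n set). K\<^sup>2)"
    using assms K by (intro sum_mono) (simp add: abs_le_square_iff[symmetric])
  then have "sqrt (\<Sum>i\<in>UNIV. (x $ i)\<^sup>2) \<le> sqrt (CARD('n) * K\<^sup>2)" by simp
  then show ?thesis using K by (simp add: norm_vec_def L2_set_def real_sqrt_mult)
qed

lemma norm_vec_inner_le:
  fixes m :: "'n::finite \<Rightarrow> 'a::real_inner"
  assumes "\<And>j. norm (m j) \<le> K"
  shows "norm (\<chi> j. m j \<bullet> z) \<le> sqrt CARD('n) * (K * norm z)"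
proof (rule norm_vec_le_sqrt_card)
  fix j
  have "\<bar>m j \<bullet> z\<bar> \<le> norm (m j) * norm z" by (rule Cauchy_Schwarz_ineq2)
  also have "\<dots> \<le> K * norm z" using assms by (intro mult_right_mono) auto
  finally show "\<bar>(\<chi> j. m j \<bullet> z) $ j\<bar> \<le> K * norm z" by simp
qed

lemma square_sum3_le: "((a::real) + b + c)\<^sup>2 \<le> 3 * (a\<^sup>2 + b\<^sup>2 + c\<^sup>2)"
proof -
  have "3 * (a\<^sup>2 + b\<^sup>2 + c\<^sup>2) - (a + b + c)\<^sup>2 = (a - b)\<^sup>2 + (b - c)\<^sup>2 + (a - c)\<^sup>2"
    by algebra
  then show ?thesis by (smt (verit) zero_le_power2)
qed

section \<open>The Moreau envelope of a convex Lipschitz function\<close>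

lemma moreau_objective_attains_min:
  fixes g :: "'c::euclidean_space \<Rightarrow> real"
  assumes g: "l-lipschitz_on UNIV g" and lam: "lam > 0"
  shows "\<exists>p. \<forall>q. g p + (norm (w - p))\<^sup>2 / (2 * lam) \<le> g q + (norm (w - q))\<^sup>2 / (2 * lam)"
proof -
  let ?v = "\<lambda>q. g q + (norm (w - q))\<^sup>2 / (2 * lam)"
  define R where "R = 2 * lam * l + 1"
  have l: "l \<ge> 0" using g lipschitz_on_nonneg by blast
  moreover have "2 * lam * l \<ge> 0" using lam l by simp
  ultimately have R: "R > 0" unfolding R_def by linarith
  have "continuous_on (cball w R) g"
    using lipschitz_on_continuous_on[OF g] by (rule continuous_on_subset) simp
  then have "continuous_on (cball w R) ?v" using lam by (intro continuous_intros) simp_all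
  moreover have "cball w R \<noteq> {}" using R by simp
  ultimately obtain p where p: "\<And>q. q \<in> cball w R \<Longrightarrow> ?v p \<le> ?v q"
    using continuous_attains_inf[OF compact_cball] by blast
  \<comment> \<open>outside the ball the quadratic term outgrows the linear decrease of g\<close>
  have outside: "?v w \<le> ?v q" if q: "q \<notin> cball w R" for q
  proof -
    define r where "r = norm (w - q)"
    have "r > R" using q unfolding r_def by (simp add: dist_norm)
    then have "l \<le> r / (2 * lam)" using lam unfolding R_def by (simp add: field_simps)
    then have "l * r \<le> r / (2 * lam) * r" using \<open>r > R\<close> R by (intro mult_right_mono) auto
    then have "l * r \<le> r\<^sup>2 / (2 * lam)" by (simp add: power2_eq_square)
    moreover have "g w - l * r \<le> g q"
      using lipschitz_onD[OF g, of q w] unfolding r_def by (simp add: dist_norm norm_minus_commute abs_le_iff)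
    ultimately show ?thesis unfolding r_def by simp
  qed
  then have "?v p \<le> ?v q" for q
  proof (cases "q \<in> cball w R")
    case False
    then show ?thesis using p[of w] R outside by fastforce
  qed (rule p)
  then show ?thesis by blast
qed

definition prox :: "real \<Rightarrow> ('c::euclidean_space \<Rightarrow> real) \<Rightarrow> 'c \<Rightarrow> 'c" where
  "prox lam g w = (SOME p. \<forall>q. g p + (norm (w - p))\<^sup>2 / (2 * lam) \<le> g q + (norm (w - q))\<^sup>2 / (2 * lam))"

definition moreau_grad :: "real \<Rightarrow> ('c::euclidean_space \<Rightarrow> real) \<Rightarrow> 'c \<Rightarrow> 'c" where
  "moreau_grad lam g w = (1 / lam) *\<^sub>R (w - prox lam g w)"

context
  fixes g :: "'c::euclidean_space \<Rightarrow> real" and l lam :: real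
  assumes g_lipschitz: "l-lipschitz_on UNIV g" and lam_pos: "lam > 0"
begin

lemma prox_minimizes:
  "g (prox lam g w) + (norm (w - prox lam g w))\<^sup>2 / (2 * lam) \<le> g q + (norm (w - q))\<^sup>2 / (2 * lam)"
  using someI_ex[OF moreau_objective_attains_min[OF g_lipschitz lam_pos]] unfolding prox_def by blast

lemma moreau_env_eq_prox:
  "moreau_env lam g w = g (prox lam g w) + (norm (w - prox lam g w))\<^sup>2 / (2 * lam)"
  unfolding moreau_env_def using prox_minimizes by (intro cInf_eq_minimum) auto

lemma moreau_env_le: "moreau_env lam g w \<le> g q + (norm (w - q))\<^sup>2 / (2 * lam)"
  using moreau_env_eq_prox prox_minimizes by simp

lemma moreau_env_lipschitz: "l-lipschitz_on UNIV (moreau_env lam g)"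
proof -
  have env_le: "moreau_env lam g a \<le> moreau_env lam g b + l * norm (a - b)" for a b
  proof -
    define p where "p = prox lam g b"
    have "moreau_env lam g a \<le> g (p + (a - b)) + (norm (b - p))\<^sup>2 / (2 * lam)"
      using moreau_env_le[of a "p + (a - b)"] by simp
    moreover have "g (p + (a - b)) \<le> g p + l * norm (a - b)"
      using lipschitz_onD[OF g_lipschitz, of "p + (a - b)" p] by (simp add: dist_norm abs_le_iff)
    ultimately show ?thesis using moreau_env_eq_prox[of b] unfolding p_def by simp
  qed
  show ?thesis
  proof (intro lipschitz_onI)
    fix a b :: 'c
    show "dist (moreau_env lam g a) (moreau_env lam g b) \<le> l * dist a b"
      using env_le[of a b] env_le[of b a] norm_minus_commute[of b a] by (simp add: dist_norm abs_le_iff)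
  qed (rule lipschitz_on_nonneg[OF g_lipschitz])
qed

lemma moreau_env_le_quadratic:
  "moreau_env lam g w' \<le> moreau_env lam g w + moreau_grad lam g w \<bullet> (w' - w) + (norm (w' - w))\<^sup>2 / (2 * lam)"
proof -
  define p where "p = prox lam g w"
  have "(norm (w' - p))\<^sup>2 = (norm (w - p))\<^sup>2 + 2 * ((w - p) \<bullet> (w' - w)) + (norm (w' - w))\<^sup>2"
    using dot_norm[of "w - p" "w' - w"] by simp
  then have "g p + (norm (w' - p))\<^sup>2 / (2 * lam)
      = moreau_env lam g w + moreau_grad lam g w \<bullet> (w' - w) + (norm (w' - w))\<^sup>2 / (2 * lam)"
    using lam_pos unfolding moreau_env_eq_prox moreau_grad_def p_def[symmetric]
    by (simp add: add_divide_distrib)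
  then show ?thesis using moreau_env_le[of w' p] by simp
qed

context
  assumes g_convex: "convex_on UNIV g"
begin

lemma prox_subgradient:
  "g (prox lam g w) + moreau_grad lam g w \<bullet> (q - prox lam g w) \<le> g q"
proof -
  define p where "p = prox lam g w"
  define m where "m = moreau_grad lam g w"
  define d where "d = q - p"
  define K where "K = (norm d)\<^sup>2 / (2 * lam)"
  define X where "X = g q - g p - m \<bullet> d"
  have wp: "w - p = lam *\<^sub>R m" unfolding m_def p_def moreau_grad_def using lam_pos by simp
  \<comment> \<open>first-order optimality of p along the segment towards q\<close>
  have "0 \<le> X + t * K" if t: "0 < t" "t < 1" for t
  proof -
    have "(norm (w - p - t *\<^sub>R d))\<^sup>2 = (norm (w - p))\<^sup>2 - 2 * t * ((w - p) \<bullet> d) + t\<^sup>2 * (norm d)\<^sup>2"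
      using dot_norm_neg[of "w - p" "t *\<^sub>R d"] by (simp add: power_mult_distrib)
    then have "(norm (w - p - t *\<^sub>R d))\<^sup>2 / (2 * lam) = (norm (w - p))\<^sup>2 / (2 * lam) - t * (m \<bullet> d) + t * (t * K)"
      using lam_pos unfolding K_def wp by (simp add: field_simps power2_eq_square)
    moreover have "g p + (norm (w - p))\<^sup>2 / (2 * lam) \<le> g (p + t *\<^sub>R d) + (norm (w - p - t *\<^sub>R d))\<^sup>2 / (2 * lam)"
      using prox_minimizes[of w "p + t *\<^sub>R d"] unfolding p_def by (simp add: diff_diff_eq)
    moreover have "g (p + t *\<^sub>R d) \<le> (1 - t) * g p + t * g q"
      using convex_onD[OF g_convex, of t p q] t unfolding d_def by (simp add: algebra_simps)
    moreover have "t * (X + t * K) = t * g q - t * g p - t * (m \<bullet> d) + t * (t * K)"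
      unfolding X_def by (simp add: algebra_simps)
    ultimately have "0 \<le> t * (X + t * K)" by (simp add: algebra_simps)
    then show ?thesis using t by (simp add: zero_le_mult_iff)
  qed
  then have ev: "\<forall>\<^sub>F t in at_right 0. 0 \<le> X + t * K"
    using eventually_at_right_real[of 0 1] by (auto elim: eventually_mono)
  have "((\<lambda>t. X + t * K) \<longlongrightarrow> X + 0 * K) (at_right 0)"
    by (intro tendsto_intros)
  from tendsto_lowerbound[OF this ev trivial_limit_at_right_real] have "0 \<le> X" by simp
  then show ?thesis unfolding X_def d_def m_def p_def by simp
qed

lemma norm_moreau_grad_le: "norm (moreau_grad lam g w) \<le> l"
proof -
  define p where "p = prox lam g w"
  define m where "m = moreau_grad lam g w"
  have "g p + m \<bullet> m \<le> g (p + m)"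
    using prox_subgradient[of w "p + m"] unfolding p_def m_def by simp
  moreover have "g (p + m) - g p \<le> l * norm m"
    using lipschitz_onD[OF g_lipschitz, of "p + m" p] by (simp add: dist_norm abs_le_iff)
  ultimately have "norm m * norm m \<le> l * norm m"
    by (simp add: power2_norm_eq_inner[symmetric] power2_eq_square)
  then show ?thesis
    using lipschitz_on_nonneg[OF g_lipschitz] unfolding m_def
    by (cases "m = 0") (auto simp: m_def)
qed

(* Firm nonexpansiveness of prox: the subgradients m_i at p_i = prox w_i are monotone,
   and w_i = p_i + lam m_i. *)
lemma moreau_grad_lipschitz:
  "norm (moreau_grad lam g w1 - moreau_grad lam g w2) \<le> norm (w1 - w2) / lam"
proof -
  define p1 p2 where "p1 = prox lam g w1" and "p2 = prox lam g w2"
  define m1 m2 where "m1 = moreau_grad lam g w1" and "m2 = moreau_grad lam g w2"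
  have "0 \<le> (m1 - m2) \<bullet> (p1 - p2)"
    using prox_subgradient[of w1 p2] prox_subgradient[of w2 p1]
    unfolding p1_def p2_def m1_def m2_def by (simp add: inner_diff_left inner_diff_right)
  moreover have "w1 - w2 = (p1 - p2) + lam *\<^sub>R (m1 - m2)"
    using lam_pos unfolding p1_def p2_def m1_def m2_def moreau_grad_def by (simp add: algebra_simps)
  ultimately have "lam * (norm (m1 - m2))\<^sup>2 \<le> (m1 - m2) \<bullet> (w1 - w2)"
    by (simp add: inner_add_right power2_norm_eq_inner)
  also have "\<dots> \<le> norm (m1 - m2) * norm (w1 - w2)" by (rule norm_cauchy_schwarz)
  finally have "norm (m1 - m2) * (lam * norm (m1 - m2)) \<le> norm (m1 - m2) * norm (w1 - w2)"
    by (simp add: power2_eq_square mult_ac)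
  then have "lam * norm (m1 - m2) \<le> norm (w1 - w2)"
    by (cases "m1 = m2") simp_all
  then show ?thesis unfolding m1_def m2_def using lam_pos by (simp add: field_simps)
qed

lemma moreau_env_remainder_le:
  "\<bar>moreau_env lam g w' - moreau_env lam g w - moreau_grad lam g w \<bullet> (w' - w)\<bar> \<le> 2 * (norm (w' - w))\<^sup>2 / lam"
proof -
  define r where "r = norm (w' - w)"
  define m m' where "m = moreau_grad lam g w" and "m' = moreau_grad lam g w'"
  have "- ((m' - m) \<bullet> (w' - w)) \<le> norm (m' - m) * r"
    unfolding r_def using Cauchy_Schwarz_ineq2[of "m' - m" "w' - w"] by linarith
  also have "\<dots> \<le> r / lam * r"
    unfolding r_def m_def m'_def by (intro mult_right_mono moreau_grad_lipschitz) auto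
  finally have "- ((m' - m) \<bullet> (w' - w)) \<le> r\<^sup>2 / lam" by (simp add: power2_eq_square)
  moreover have "moreau_env lam g w \<le> moreau_env lam g w' + m' \<bullet> (w - w') + r\<^sup>2 / (2 * lam)"
    using moreau_env_le_quadratic[of w w'] unfolding r_def m'_def by (simp add: norm_minus_commute)
  moreover have "moreau_env lam g w' \<le> moreau_env lam g w + m \<bullet> (w' - w) + r\<^sup>2 / (2 * lam)"
    using moreau_env_le_quadratic[of w' w] unfolding r_def m_def .
  moreover have "m' \<bullet> (w - w') = - (m \<bullet> (w' - w)) - (m' - m) \<bullet> (w' - w)"
    by (simp add: inner_diff_left inner_diff_right)
  moreover have "r\<^sup>2 / (2 * lam) \<le> r\<^sup>2 / lam" "0 \<le> r\<^sup>2 / (2 * lam)"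
    using lam_pos by (simp_all add: frac_le)
  ultimately show ?thesis unfolding m_def r_def by (simp add: abs_le_iff)
qed

lemma moreau_env_has_derivative:
  "(moreau_env lam g has_derivative (\<lambda>v. moreau_grad lam g w \<bullet> v)) (at w)"
  unfolding has_derivative_at_alt
proof (intro conjI allI impI bounded_linear_inner_right)
  fix e :: real assume e: "e > 0"
  show "\<exists>d>0. \<forall>w'. norm (w' - w) < d \<longrightarrow>
    norm (moreau_env lam g w' - moreau_env lam g w - moreau_grad lam g w \<bullet> (w' - w)) \<le> e * norm (w' - w)"
  proof (intro exI[of _ "e * lam / 2"] conjI allI impI)
    fix w' assume w': "norm (w' - w) < e * lam / 2"
    have "2 * (norm (w' - w))\<^sup>2 / lam = (2 * norm (w' - w) / lam) * norm (w' - w)"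
      by (simp add: power2_eq_square)
    also have "\<dots> \<le> e * norm (w' - w)"
      using w' lam_pos by (intro mult_right_mono) (simp_all add: field_simps)
    finally show "norm (moreau_env lam g w' - moreau_env lam g w - moreau_grad lam g w \<bullet> (w' - w))
        \<le> e * norm (w' - w)"
      using moreau_env_remainder_le[of w' w] by simp
  qed (use e lam_pos in simp)
qed

end

end

lemma smooth_h_has_derivative:
  fixes h :: "'h::finite \<Rightarrow> 'c::euclidean_space \<Rightarrow> real"
  assumes "\<And>j. convex_on UNIV (h j)" and "\<And>j. l-lipschitz_on UNIV (h j)" and "lam > 0"
  shows "(smooth_h lam h has_derivative (\<lambda>v. \<chi> j. moreau_grad lam (h j) w \<bullet> v)) (at w)"
  using assms by (intro has_derivative_componentwise_within[THEN iffD2])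
    (auto simp: Basis_vec_def inner_axis smooth_h_def intro: moreau_env_has_derivative)

lemma smooth_h_lipschitz:
  fixes h :: "'h::finite \<Rightarrow> 'c::euclidean_space \<Rightarrow> real"
  assumes "\<And>j. l-lipschitz_on UNIV (h j)" and "lam > 0"
  shows "(sqrt CARD('h) * l)-lipschitz_on UNIV (smooth_h lam h)"
proof (rule lipschitz_onI)
  fix w1 w2 :: 'c
  have "norm (smooth_h lam h w1 - smooth_h lam h w2) \<le> sqrt CARD('h) * (l * dist w1 w2)"
    using lipschitz_onD[OF moreau_env_lipschitz[OF assms]]
    by (intro norm_vec_le_sqrt_card) (simp add: smooth_h_def dist_real_def)
  then show "dist (smooth_h lam h w1) (smooth_h lam h w2) \<le> sqrt CARD('h) * l * dist w1 w2"
    by (simp add: dist_norm mult.assoc)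
qed (use lipschitz_on_nonneg[OF assms(1)] in simp)

section \<open>Integrals of non-measurable bounds\<close>

lemma nn_integral_cmult_add_const_le:
  fixes f :: "'a \<Rightarrow> ennreal"
  assumes M: "prob_space M" and a: "0 \<le> a" and b: "0 \<le> b"
  shows "(\<integral>\<^sup>+ x. ennreal a * f x + ennreal b \<partial>M) \<le> ennreal a * integral\<^sup>N M f + ennreal b"
proof (cases "a = 0")
  case True
  then show ?thesis using M by (simp add: prob_space.emeasure_space_1)
next
  case False
  then have a: "0 < a" using a by simp
  \<comment> \<open>f need not be measurable, so we compare with the simple functions below the integrand\<close>
  have "integral\<^sup>S M s \<le> ennreal a * integral\<^sup>N M f + ennreal b"
    if s: "simple_function M s" "s \<le> (\<lambda>x. ennreal a * f x + ennreal b)" for s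
  proof -
    define t where "t x = ennreal (1 / a) * (s x - ennreal b)" for x
    have inv: "ennreal (1 / a) * ennreal a = 1" using a by (simp flip: ennreal_mult)
    have t: "simple_function M t"
      unfolding t_def using simple_function_compose[OF s(1), of "\<lambda>z. ennreal (1 / a) * (z - ennreal b)"]
      by (simp add: o_def)
    have tf: "t x \<le> f x" for x
    proof -
      have "s x - ennreal b \<le> ennreal a * f x"
        using s(2) by (auto simp: le_fun_def ennreal_minus_le_iff add.commute)
      then have "t x \<le> ennreal (1 / a) * (ennreal a * f x)" unfolding t_def by (rule mult_left_mono) simp
      then show ?thesis using inv by (simp add: mult.assoc[symmetric])
    qed
    have st: "s x \<le> ennreal a * t x + ennreal b" for x
      unfolding t_def using inv by (simp add: mult.assoc[symmetric] mult.commute diff_add_self_ennreal nle_le)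
    have "integral\<^sup>S M s = integral\<^sup>N M s" using s(1) by (simp add: nn_integral_eq_simple_integral)
    also have "\<dots> \<le> (\<integral>\<^sup>+ x. ennreal a * t x + ennreal b \<partial>M)" by (intro nn_integral_mono st)
    also have "\<dots> = ennreal a * integral\<^sup>N M t + ennreal b"
      using borel_measurable_simple_function[OF t] M
      by (simp add: nn_integral_add nn_integral_cmult prob_space.emeasure_space_1)
    also have "\<dots> \<le> ennreal a * integral\<^sup>N M f + ennreal b"
      by (intro add_mono mult_left_mono nn_integral_mono tf) auto
    finally show ?thesis .
  qed
  then show ?thesis unfolding nn_integral_def by (intro SUP_least) auto
qed

lemma nn_integral_le_affine_bound:
  assumes M: "prob_space M" and F: "AE x in M. F x \<le> a * G x + b"
    and G: "\<And>x. 0 \<le> G x" "(\<integral>\<^sup>+ x. ennreal (G x) \<partial>M) \<le> ennreal B"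
    and "0 \<le> a" "0 \<le> b" "0 \<le> B" and "a * B + b \<le> C"
  shows "(\<integral>\<^sup>+ x. ennreal (F x) \<partial>M) \<le> ennreal C"
proof -
  have "ennreal a * ennreal (G x) + ennreal b = ennreal (a * G x + b)" for x
    using assms by (simp add: ennreal_mult ennreal_plus)
  then have "(\<integral>\<^sup>+ x. ennreal (F x) \<partial>M) \<le> (\<integral>\<^sup>+ x. ennreal a * ennreal (G x) + ennreal b \<partial>M)"
    using F by (intro nn_integral_mono_AE) (auto elim!: eventually_mono intro: ennreal_leI)
  also have "\<dots> \<le> ennreal a * ennreal B + ennreal b"
    using nn_integral_cmult_add_const_le[OF M \<open>0 \<le> a\<close> \<open>0 \<le> b\<close>] G(2) by (meson add_right_mono mult_left_mono order.trans zero_le)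
  also have "\<dots> \<le> ennreal C" using assms by (simp add: ennreal_leI flip: ennreal_mult ennreal_plus)
  finally show ?thesis .
qed

lemma nn_integral_le_const_AE:
  assumes "prob_space M" and "AE x in M. F x \<le> b"
  shows "(\<integral>\<^sup>+ x. ennreal (F x) \<partial>M) \<le> ennreal b"
proof -
  have "AE x in M. ennreal (F x) \<le> ennreal b" using assms(2) by (auto elim: eventually_mono intro: ennreal_leI)
  then have "(\<integral>\<^sup>+ x. ennreal (F x) \<partial>M) \<le> (\<integral>\<^sup>+ x. ennreal b \<partial>M)" by (rule nn_integral_mono_AE)
  then show ?thesis using assms(1) by (simp add: prob_space.emeasure_space_1)
qed

section \<open>The smoothed composite at a fixed sample\<close>

(* The Composite Assumption for one fixed sample xi, with the gradient-Lipschitz hypotheses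
   on phi in the squared form of the paper. *)
locale smoothed_composite =
  fixes lam l\<^sub>c l\<^sub>h l\<^sub>\<phi> L\<^sub>\<phi> :: real
    and c :: "'x::euclidean_space \<Rightarrow> 'c::euclidean_space"
    and h :: "'h::finite \<Rightarrow> 'c \<Rightarrow> real"
    and \<phi> :: "real ^ 'h \<Rightarrow> 'y::euclidean_space \<Rightarrow> real"
  assumes lam_pos: "0 < lam"
    and c_lipschitz: "l\<^sub>c-lipschitz_on UNIV c"
    and c_differentiable: "\<And>x. c differentiable (at x)"
    and h_convex: "\<And>j. convex_on UNIV (h j)"
    and h_lipschitz: "\<And>j. l\<^sub>h-lipschitz_on UNIV (h j)"
    and \<phi>_lipschitz: "l\<^sub>\<phi>-lipschitz_on UNIV (\<lambda>p. \<phi> (fst p) (snd p))"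
    and \<phi>_differentiable: "\<And>u y. (\<lambda>p. \<phi> (fst p) (snd p)) differentiable (at (u, y))"
    and L\<^sub>\<phi>_nonneg: "0 \<le> L\<^sub>\<phi>"
    and grad_u_lipschitz: "\<And>u1 u2 y1 y2. (norm (grad (\<lambda>u. \<phi> u y1) u1 - grad (\<lambda>u. \<phi> u y2) u2))\<^sup>2
          \<le> L\<^sub>\<phi>\<^sup>2 * ((norm (u1 - u2))\<^sup>2 + (norm (y1 - y2))\<^sup>2)"
    and grad_y_lipschitz: "\<And>u1 u2 y1 y2. (norm (grad (\<lambda>y. \<phi> u1 y) y1 - grad (\<lambda>y. \<phi> u2 y) y2))\<^sup>2
          \<le> L\<^sub>\<phi>\<^sup>2 * ((norm (u1 - u2))\<^sup>2 + (norm (y1 - y2))\<^sup>2)"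
begin

abbreviation Dc :: "'x \<Rightarrow> 'x \<Rightarrow> 'c" where
  "Dc x \<equiv> frechet_derivative c (at x)"

abbreviation hc :: "'x \<Rightarrow> real ^ 'h" where
  "hc x \<equiv> smooth_h lam h (c x)"

abbreviation Dhc :: "'x \<Rightarrow> 'x \<Rightarrow> real ^ 'h" where
  "Dhc x v \<equiv> \<chi> j. moreau_grad lam (h j) (c x) \<bullet> Dc x v"

lemma lipschitz_constants_nonneg: "0 \<le> l\<^sub>c" "0 \<le> l\<^sub>h" "0 \<le> l\<^sub>\<phi>"
  using c_lipschitz h_lipschitz \<phi>_lipschitz lipschitz_on_nonneg by blast+

lemma c_has_derivative: "(c has_derivative Dc x) (at x)"
  using c_differentiable frechet_derivative_works by blast

lemma norm_Dc_le: "norm (Dc x v) \<le> l\<^sub>c * norm v"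
  by (rule has_derivative_norm_le_lipschitz[OF c_lipschitz c_has_derivative])

lemma norm_Dhc_le: "norm (Dhc x v) \<le> sqrt CARD('h) * l\<^sub>h * l\<^sub>c * norm v"
proof -
  have "norm (Dhc x v) \<le> sqrt CARD('h) * (l\<^sub>h * norm (Dc x v))"
    using norm_moreau_grad_le[OF h_lipschitz lam_pos h_convex] by (rule norm_vec_inner_le)
  also have "\<dots> \<le> sqrt CARD('h) * (l\<^sub>h * (l\<^sub>c * norm v))"
    using norm_Dc_le lipschitz_constants_nonneg by (intro mult_left_mono) auto
  finally show ?thesis by (simp add: mult_ac)
qed

lemma hc_lipschitz: "norm (hc x1 - hc x2) \<le> sqrt CARD('h) * l\<^sub>h * l\<^sub>c * norm (x1 - x2)"
proof -
  have "(sqrt CARD('h) * l\<^sub>h)-lipschitz_on (range c) (smooth_h lam h)"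
    using smooth_h_lipschitz[where h=h and l=l\<^sub>h and lam=lam] h_lipschitz lam_pos lipschitz_on_subset by blast
  from lipschitz_onD[OF lipschitz_on_compose2[OF c_lipschitz this]] show ?thesis
    by (simp add: dist_norm mult_ac)
qed

lemma norm_grad_u_le: "norm (grad (\<lambda>u. \<phi> u y) u) \<le> l\<^sub>\<phi>"
  by (rule norm_grad_le_lipschitz[OF lipschitz_on_partial[OF \<phi>_lipschitz] differentiable_partial[OF \<phi>_differentiable]])

lemma grad_u_lipschitz_in_u: "norm (grad (\<lambda>u. \<phi> u y) u1 - grad (\<lambda>u. \<phi> u y) u2) \<le> L\<^sub>\<phi> * norm (u1 - u2)"
proof (rule power2_le_imp_le)
  show "(norm (grad (\<lambda>u. \<phi> u y) u1 - grad (\<lambda>u. \<phi> u y) u2))\<^sup>2 \<le> (L\<^sub>\<phi> * norm (u1 - u2))\<^sup>2"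
    using grad_u_lipschitz[of y u1 y u2] by (simp add: power_mult_distrib)
qed (simp add: L\<^sub>\<phi>_nonneg)

lemma grad_u_lipschitz_in_y: "norm (grad (\<lambda>u. \<phi> u y1) u - grad (\<lambda>u. \<phi> u y2) u) \<le> L\<^sub>\<phi> * norm (y1 - y2)"
proof (rule power2_le_imp_le)
  show "(norm (grad (\<lambda>u. \<phi> u y1) u - grad (\<lambda>u. \<phi> u y2) u))\<^sup>2 \<le> (L\<^sub>\<phi> * norm (y1 - y2))\<^sup>2"
    using grad_u_lipschitz[of y1 u y2 u] by (simp add: power_mult_distrib)
qed (simp add: L\<^sub>\<phi>_nonneg)

lemma inner_grad_x:
  "grad (\<lambda>x. \<phi> (hc x) y) x \<bullet> v = grad (\<lambda>u. \<phi> u y) (hc x) \<bullet> Dhc x v"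
proof -
  note c_has_derivative
  moreover have "(smooth_h lam h has_derivative (\<lambda>w. \<chi> j. moreau_grad lam (h j) (c x) \<bullet> w)) (at (c x))"
    by (rule smooth_h_has_derivative[OF h_convex h_lipschitz lam_pos])
  moreover have "((\<lambda>u. \<phi> u y) has_derivative (\<lambda>w. grad (\<lambda>u. \<phi> u y) (hc x) \<bullet> w)) (at (hc x))"
    by (rule has_derivative_grad[OF differentiable_partial[OF \<phi>_differentiable]])
  ultimately have "((\<lambda>u. \<phi> u y) \<circ> (smooth_h lam h \<circ> c) has_derivative
      (\<lambda>w. grad (\<lambda>u. \<phi> u y) (hc x) \<bullet> w) \<circ> ((\<lambda>w. \<chi> j. moreau_grad lam (h j) (c x) \<bullet> w) \<circ> Dc x)) (at x)"
    by (intro diff_chain_at) simp_all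
  then have "((\<lambda>x. \<phi> (hc x) y) has_derivative (\<lambda>v. grad (\<lambda>u. \<phi> u y) (hc x) \<bullet> Dhc x v)) (at x)"
    by (simp add: o_def)
  moreover from this have "((\<lambda>x. \<phi> (hc x) y) has_derivative (\<lambda>v. grad (\<lambda>x. \<phi> (hc x) y) x \<bullet> v)) (at x)"
    by (intro has_derivative_grad differentiableI)
  ultimately show ?thesis using has_derivative_unique by metis
qed

lemma onorm_Dc_diff:
  "0 \<le> onorm (\<lambda>v. Dc a v - Dc b v)" "norm (Dc a v - Dc b v) \<le> onorm (\<lambda>v. Dc a v - Dc b v) * norm v"
proof -
  have "bounded_linear (\<lambda>v. Dc a v - Dc b v)"
    by (intro bounded_linear_sub has_derivative_bounded_linear[OF c_has_derivative])
  then show "0 \<le> onorm (\<lambda>v. Dc a v - Dc b v)" "norm (Dc a v - Dc b v) \<le> onorm (\<lambda>v. Dc a v - Dc b v) * norm v"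
    using onorm_pos_le onorm by fastforce+
qed

lemma grad_u_at_hc_lipschitz:
  "norm (grad (\<lambda>u. \<phi> u y) (hc x1) - grad (\<lambda>u. \<phi> u y) (hc x2))
     \<le> L\<^sub>\<phi> * (sqrt CARD('h) * l\<^sub>h * l\<^sub>c * norm (x1 - x2))"
  using grad_u_lipschitz_in_u order_trans mult_left_mono[OF hc_lipschitz L\<^sub>\<phi>_nonneg] by blast

lemma moreau_grad_at_c_lipschitz:
  "norm (moreau_grad lam (h j) (c x1) - moreau_grad lam (h j) (c x2)) \<le> l\<^sub>c * norm (x1 - x2) / lam"
proof -
  have "norm (moreau_grad lam (h j) (c x1) - moreau_grad lam (h j) (c x2)) \<le> norm (c x1 - c x2) / lam"
    by (rule moreau_grad_lipschitz[OF h_lipschitz lam_pos h_convex])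
  also have "\<dots> \<le> l\<^sub>c * norm (x1 - x2) / lam"
    using lipschitz_onD[OF c_lipschitz, of x1 x2] lam_pos by (intro divide_right_mono) (auto simp: dist_norm)
  finally show ?thesis .
qed

lemma norm_grad_x_diff_le:
  "norm (grad (\<lambda>x. \<phi> (hc x) y) x1 - grad (\<lambda>x. \<phi> (hc x) y) x2)
     \<le> l\<^sub>\<phi> * sqrt CARD('h) * l\<^sub>h * onorm (\<lambda>v. Dc x1 v - Dc x2 v)
       + l\<^sub>\<phi> * sqrt CARD('h) * l\<^sub>c\<^sup>2 * norm (x1 - x2) / lam
       + L\<^sub>\<phi> * CARD('h) * l\<^sub>h\<^sup>2 * l\<^sub>c\<^sup>2 * norm (x1 - x2)"
    (is "norm ?G \<le> ?A + ?B + ?C")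
proof -
  define s r N where "s = sqrt CARD('h)" and "r = norm (x1 - x2)" and "N = onorm (\<lambda>v. Dc x1 v - Dc x2 v)"
  define a1 a2 where "a1 = grad (\<lambda>u. \<phi> u y) (hc x1)" and "a2 = grad (\<lambda>u. \<phi> u y) (hc x2)"
  define m1 m2 where "m1 j = moreau_grad lam (h j) (c x1)" and "m2 j = moreau_grad lam (h j) (c x2)" for j
  have a1: "norm a1 \<le> l\<^sub>\<phi>" unfolding a1_def by (rule norm_grad_u_le)
  have a12: "norm (a1 - a2) \<le> L\<^sub>\<phi> * (s * l\<^sub>h * l\<^sub>c * r)"
    unfolding a1_def a2_def s_def r_def by (rule grad_u_at_hc_lipschitz)
  have m1: "norm (m1 j) \<le> l\<^sub>h" for j unfolding m1_def by (rule norm_moreau_grad_le[OF h_lipschitz lam_pos h_convex])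
  have m12: "norm (m1 j - m2 j) \<le> l\<^sub>c * r / lam" for j
    unfolding m1_def m2_def r_def by (rule moreau_grad_at_c_lipschitz)
  note N = onorm_Dc_diff[where a=x1 and b=x2, folded N_def]
  have "?G \<bullet> v \<le> (?A + ?B + ?C) * norm v" for v
  proof -
    \<comment> \<open>split the variation of the chain-rule factors a, m and Dc\<close>
    define P where "P = (\<chi> j. m1 j \<bullet> (Dc x1 v - Dc x2 v))"
    define Q where "Q = (\<chi> j. (m1 j - m2 j) \<bullet> Dc x2 v)"
    have "Dhc x1 v = P + Q + Dhc x2 v"
      unfolding P_def Q_def m1_def m2_def by (simp add: vec_eq_iff inner_diff_left inner_diff_right)
    then have "?G \<bullet> v = a1 \<bullet> P + a1 \<bullet> Q + (a1 - a2) \<bullet> Dhc x2 v"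
      unfolding inner_diff_left inner_grad_x a1_def a2_def by (simp add: inner_add_right inner_diff_left)
    also have "\<dots> \<le> l\<^sub>\<phi> * (s * (l\<^sub>h * (N * norm v))) + l\<^sub>\<phi> * (s * (l\<^sub>c * r / lam * (l\<^sub>c * norm v)))
        + L\<^sub>\<phi> * (s * l\<^sub>h * l\<^sub>c * r) * (s * l\<^sub>h * l\<^sub>c * norm v)"
    proof (intro add_mono inner_le_of_norm_le a1 a12)
      have "norm P \<le> s * (l\<^sub>h * norm (Dc x1 v - Dc x2 v))" unfolding P_def s_def by (rule norm_vec_inner_le[OF m1])
      also have "\<dots> \<le> s * (l\<^sub>h * (N * norm v))"
        using N lipschitz_constants_nonneg unfolding s_def by (intro mult_left_mono) auto
      finally show "norm P \<le> s * (l\<^sub>h * (N * norm v))" .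
      have "norm Q \<le> s * (l\<^sub>c * r / lam * norm (Dc x2 v))" unfolding Q_def s_def by (rule norm_vec_inner_le[OF m12])
      also have "\<dots> \<le> s * (l\<^sub>c * r / lam * (l\<^sub>c * norm v))"
        using norm_Dc_le lipschitz_constants_nonneg lam_pos unfolding s_def r_def by (intro mult_left_mono) auto
      finally show "norm Q \<le> s * (l\<^sub>c * r / lam * (l\<^sub>c * norm v))" .
      show "norm (Dhc x2 v) \<le> s * l\<^sub>h * l\<^sub>c * norm v" unfolding s_def by (rule norm_Dhc_le)
    qed
    also have "\<dots> = (?A + ?B + ?C) * norm v"
      unfolding s_def r_def N_def by (simp add: algebra_simps power2_eq_square)
    finally show ?thesis .
  qed
  moreover have "0 \<le> ?A + ?B + ?C"
    using N(1) lipschitz_constants_nonneg L\<^sub>\<phi>_nonneg lam_pos unfolding N_def by simp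
  ultimately show ?thesis by (rule norm_le_if_inner_le)
qed

lemma grad_x_lipschitz_in_x:
  "(norm (grad (\<lambda>x. \<phi> (hc x) y) x1 - grad (\<lambda>x. \<phi> (hc x) y) x2))\<^sup>2
     \<le> 3 * CARD('h) * l\<^sub>h\<^sup>2 * l\<^sub>\<phi>\<^sup>2 * (onorm (\<lambda>v. Dc x1 v - Dc x2 v))\<^sup>2
       + (3 * l\<^sub>c^4 * l\<^sub>\<phi>\<^sup>2 * CARD('h) / lam\<^sup>2 + 3 * l\<^sub>c^4 * (real CARD('h))\<^sup>2 * l\<^sub>h^4 * L\<^sub>\<phi>\<^sup>2)
         * (norm (x1 - x2))\<^sup>2"
proof -
  let ?A = "l\<^sub>\<phi> * sqrt CARD('h) * l\<^sub>h * onorm (\<lambda>v. Dc x1 v - Dc x2 v)"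
  let ?B = "l\<^sub>\<phi> * sqrt CARD('h) * l\<^sub>c\<^sup>2 * norm (x1 - x2) / lam"
  let ?C = "L\<^sub>\<phi> * CARD('h) * l\<^sub>h\<^sup>2 * l\<^sub>c\<^sup>2 * norm (x1 - x2)"
  have "(norm (grad (\<lambda>x. \<phi> (hc x) y) x1 - grad (\<lambda>x. \<phi> (hc x) y) x2))\<^sup>2 \<le> (?A + ?B + ?C)\<^sup>2"
    using norm_grad_x_diff_le by (intro power_mono) auto
  also have "\<dots> \<le> 3 * (?A\<^sup>2 + ?B\<^sup>2 + ?C\<^sup>2)" by (rule square_sum3_le)
  also have "\<dots> = 3 * CARD('h) * l\<^sub>h\<^sup>2 * l\<^sub>\<phi>\<^sup>2 * (onorm (\<lambda>v. Dc x1 v - Dc x2 v))\<^sup>2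
       + (3 * l\<^sub>c^4 * l\<^sub>\<phi>\<^sup>2 * CARD('h) / lam\<^sup>2 + 3 * l\<^sub>c^4 * (real CARD('h))\<^sup>2 * l\<^sub>h^4 * L\<^sub>\<phi>\<^sup>2)
         * (norm (x1 - x2))\<^sup>2"
    by (simp add: power_mult_distrib power_divide algebra_simps flip: power_mult)
  finally show ?thesis .
qed

lemma grad_x_lipschitz_in_y:
  "(norm (grad (\<lambda>x. \<phi> (hc x) y1) x - grad (\<lambda>x. \<phi> (hc x) y2) x))\<^sup>2
     \<le> (max (sqrt CARD('h) * L\<^sub>\<phi> * l\<^sub>h * l\<^sub>c) L\<^sub>\<phi>)\<^sup>2 * (norm (y1 - y2))\<^sup>2"
    (is "(norm ?G)\<^sup>2 \<le> (max ?K _)\<^sup>2 * _")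
proof -
  have "?G \<bullet> v \<le> ?K * norm (y1 - y2) * norm v" for v
  proof -
    have "?G \<bullet> v = (grad (\<lambda>u. \<phi> u y1) (hc x) - grad (\<lambda>u. \<phi> u y2) (hc x)) \<bullet> Dhc x v"
      by (simp add: inner_diff_left inner_grad_x)
    also have "\<dots> \<le> (L\<^sub>\<phi> * norm (y1 - y2)) * (sqrt CARD('h) * l\<^sub>h * l\<^sub>c * norm v)"
      by (intro inner_le_of_norm_le grad_u_lipschitz_in_y norm_Dhc_le)
    finally show ?thesis by (simp add: mult_ac)
  qed
  then have "norm ?G \<le> ?K * norm (y1 - y2)"
    using lipschitz_constants_nonneg L\<^sub>\<phi>_nonneg by (intro norm_le_if_inner_le) auto
  also have "\<dots> \<le> max ?K L\<^sub>\<phi> * norm (y1 - y2)" by (intro mult_right_mono) auto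
  finally show ?thesis by (simp add: power_mono flip: power_mult_distrib)
qed

lemma grad_y_lipschitz_in_xy:
  "(norm (grad (\<lambda>y. \<phi> (hc x1) y) y1 - grad (\<lambda>y. \<phi> (hc x2) y) y2))\<^sup>2
     \<le> (max (sqrt CARD('h) * L\<^sub>\<phi> * l\<^sub>h * l\<^sub>c) L\<^sub>\<phi>)\<^sup>2 * ((norm (x1 - x2))\<^sup>2 + (norm (y1 - y2))\<^sup>2)"
    (is "_ \<le> ?M\<^sup>2 * _")
proof -
  let ?K = "sqrt CARD('h) * l\<^sub>h * l\<^sub>c"
  have "(norm (grad (\<lambda>y. \<phi> (hc x1) y) y1 - grad (\<lambda>y. \<phi> (hc x2) y) y2))\<^sup>2
      \<le> L\<^sub>\<phi>\<^sup>2 * ((norm (hc x1 - hc x2))\<^sup>2 + (norm (y1 - y2))\<^sup>2)"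
    by (rule grad_y_lipschitz)
  also have "\<dots> \<le> L\<^sub>\<phi>\<^sup>2 * ((?K * norm (x1 - x2))\<^sup>2 + (norm (y1 - y2))\<^sup>2)"
    by (intro mult_left_mono add_right_mono power_mono hc_lipschitz) auto
  also have "\<dots> = (L\<^sub>\<phi> * ?K)\<^sup>2 * (norm (x1 - x2))\<^sup>2 + L\<^sub>\<phi>\<^sup>2 * (norm (y1 - y2))\<^sup>2"
    by (simp add: power_mult_distrib algebra_simps)
  also have "\<dots> \<le> ?M\<^sup>2 * (norm (x1 - x2))\<^sup>2 + ?M\<^sup>2 * (norm (y1 - y2))\<^sup>2"
    using lipschitz_constants_nonneg L\<^sub>\<phi>_nonneg
    by (intro add_mono mult_right_mono power_mono) (auto simp: mult_ac)
  finally show ?thesis by (simp add: distrib_left)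
qed

end

theorem lemmaB2:
  fixes M :: "'e measure" and \<Xi> :: "'e set"
    and X :: "'x::euclidean_space set" and Y :: "'y::euclidean_space set"
    and c :: "'x \<Rightarrow> 'e \<Rightarrow> 'c::euclidean_space"
    and h :: "'h::finite \<Rightarrow> 'c \<Rightarrow> real"
    and \<phi> :: "real ^ 'h \<Rightarrow> 'y \<Rightarrow> 'e \<Rightarrow> real"
    and D\<^sub>X D\<^sub>Y l\<^sub>c l\<^sub>h l\<^sub>\<phi> L\<^sub>c L\<^sub>\<phi> lam :: real
  assumes P: "prob_space M"
    and supp: "AE \<xi> in M. \<xi> \<in> \<Xi>"
    and meas_c: "\<And>x. (\<lambda>\<xi>. c x \<xi>) \<in> borel_measurable M"
    and meas_phi: "\<And>u y. (\<lambda>\<xi>. \<phi> u y \<xi>) \<in> borel_measurable M"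
    and X: "X \<noteq> {}" "closed X" "convex X"
    and Y: "Y \<noteq> {}" "closed Y" "convex Y"
    and diff_c: "\<And>\<xi> x. \<xi> \<in> \<Xi> \<Longrightarrow> (\<lambda>x. c x \<xi>) differentiable (at x)"
    and diff_phi: "\<And>\<xi> u y. \<xi> \<in> \<Xi> \<Longrightarrow> (\<lambda>p. \<phi> (fst p) (snd p) \<xi>) differentiable (at (u, y))"
    and A1: "compact X" "D\<^sub>X = diameter X"
    and A2: "compact Y" "D\<^sub>Y = diameter Y"
    and A3: "\<And>\<xi>. \<xi> \<in> \<Xi> \<Longrightarrow> l\<^sub>c-lipschitz_on UNIV (\<lambda>x. c x \<xi>)"
    and A4: "\<And>j. convex_on UNIV (h j)" "\<And>j. l\<^sub>h-lipschitz_on UNIV (h j)"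
    and A5: "\<And>\<xi> u u' y. \<xi> \<in> \<Xi> \<Longrightarrow> (\<forall>i. u $ i \<le> u' $ i) \<Longrightarrow> \<phi> u y \<xi> \<le> \<phi> u' y \<xi>"
      "\<And>\<xi>. \<xi> \<in> \<Xi> \<Longrightarrow> l\<^sub>\<phi>-lipschitz_on UNIV (\<lambda>p. \<phi> (fst p) (snd p) \<xi>)"
    and A6: "0 \<le> L\<^sub>c"
      "\<And>x1 x2. (\<integral>\<^sup>+ \<xi>. ennreal ((onorm (\<lambda>v. frechet_derivative (\<lambda>x. c x \<xi>) (at x1) v
                                         - frechet_derivative (\<lambda>x. c x \<xi>) (at x2) v))\<^sup>2) \<partial>M)
               \<le> ennreal (L\<^sub>c\<^sup>2 * (norm (x1 - x2))\<^sup>2)"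
    and A7: "0 \<le> L\<^sub>\<phi>"
      "\<And>\<xi> u1 u2 y1 y2. \<xi> \<in> \<Xi> \<Longrightarrow>
         (norm (grad (\<lambda>u. \<phi> u y1 \<xi>) u1 - grad (\<lambda>u. \<phi> u y2 \<xi>) u2))\<^sup>2
           \<le> L\<^sub>\<phi>\<^sup>2 * ((norm (u1 - u2))\<^sup>2 + (norm (y1 - y2))\<^sup>2)"
      "\<And>\<xi> u1 u2 y1 y2. \<xi> \<in> \<Xi> \<Longrightarrow>
         (norm (grad (\<lambda>y. \<phi> u1 y \<xi>) y1 - grad (\<lambda>y. \<phi> u2 y \<xi>) y2))\<^sup>2
           \<le> L\<^sub>\<phi>\<^sup>2 * ((norm (u1 - u2))\<^sup>2 + (norm (y1 - y2))\<^sup>2)"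
    and lam: "lam > 0"
  shows
    "let d\<^sub>h = real CARD('h);
         L\<^sub>x = sqrt (3 * l\<^sub>c^4 * l\<^sub>\<phi>\<^sup>2 * d\<^sub>h / lam\<^sup>2 + 3 * d\<^sub>h * l\<^sub>h\<^sup>2 * l\<^sub>\<phi>\<^sup>2 * L\<^sub>c\<^sup>2
                   + 3 * l\<^sub>c^4 * d\<^sub>h\<^sup>2 * l\<^sub>h^4 * L\<^sub>\<phi>\<^sup>2);
         L\<^sub>y = max (sqrt d\<^sub>h * L\<^sub>\<phi> * l\<^sub>h * l\<^sub>c) L\<^sub>\<phi>;
         fl = f_lam lam \<phi> h c
     in (\<forall>x1\<in>X. \<forall>x2\<in>X. \<forall>y\<in>Y.
           (\<integral>\<^sup>+ \<xi>. ennreal ((norm (grad (\<lambda>x. fl x y \<xi>) x1 - grad (\<lambda>x. fl x y \<xi>) x2))\<^sup>2) \<partial>M)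
             \<le> ennreal (L\<^sub>x\<^sup>2 * (norm (x1 - x2))\<^sup>2))
      \<and> (\<forall>x\<in>X. \<forall>y1\<in>Y. \<forall>y2\<in>Y.
           (\<integral>\<^sup>+ \<xi>. ennreal ((norm (grad (\<lambda>x'. fl x' y1 \<xi>) x - grad (\<lambda>x'. fl x' y2 \<xi>) x))\<^sup>2) \<partial>M)
             \<le> ennreal (L\<^sub>y\<^sup>2 * (norm (y1 - y2))\<^sup>2))
      \<and> (\<forall>x1\<in>X. \<forall>x2\<in>X. \<forall>y1\<in>Y. \<forall>y2\<in>Y.
           (\<integral>\<^sup>+ \<xi>. ennreal ((norm (grad (\<lambda>y. fl x1 y \<xi>) y1 - grad (\<lambda>y. fl x2 y \<xi>) y2))\<^sup>2) \<partial>M)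
             \<le> ennreal (L\<^sub>y\<^sup>2 * ((norm (x1 - x2))\<^sup>2 + (norm (y1 - y2))\<^sup>2)))"
proof -
  \<comment> \<open>the bounds hold for each sample in \<Xi>\<close>
  define d where "d = real CARD('h)"
  define Lx where "Lx = sqrt (3 * l\<^sub>c^4 * l\<^sub>\<phi>\<^sup>2 * d / lam\<^sup>2 + 3 * d * l\<^sub>h\<^sup>2 * l\<^sub>\<phi>\<^sup>2 * L\<^sub>c\<^sup>2
                   + 3 * l\<^sub>c^4 * d\<^sup>2 * l\<^sub>h^4 * L\<^sub>\<phi>\<^sup>2)"
  define Ly where "Ly = max (sqrt d * L\<^sub>\<phi> * l\<^sub>h * l\<^sub>c) L\<^sub>\<phi>"
  have sample: "AE \<xi> in M. smoothed_composite lam l\<^sub>c l\<^sub>h l\<^sub>\<phi> L\<^sub>\<phi> (\<lambda>x. c x \<xi>) h (\<lambda>u y. \<phi> u y \<xi>)"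
    using supp by (rule eventually_mono) (unfold_locales; simp add: A3 diff_c A4 A5(2) diff_phi A7 lam)
  have "(\<integral>\<^sup>+ \<xi>. ennreal ((norm (grad (\<lambda>x. f_lam lam \<phi> h c x y \<xi>) x1 - grad (\<lambda>x. f_lam lam \<phi> h c x y \<xi>) x2))\<^sup>2) \<partial>M)
      \<le> ennreal (Lx\<^sup>2 * (norm (x1 - x2))\<^sup>2)" for x1 x2 y
    unfolding f_lam_def
    by (rule nn_integral_le_affine_bound[OF P eventually_mono[OF sample smoothed_composite.grad_x_lipschitz_in_x] _ A6(2)])
      (auto simp: Lx_def d_def algebra_simps)
  moreover have "(\<integral>\<^sup>+ \<xi>. ennreal ((norm (grad (\<lambda>x'. f_lam lam \<phi> h c x' y1 \<xi>) x - grad (\<lambda>x'. f_lam lam \<phi> h c x' y2 \<xi>) x))\<^sup>2) \<partial>M)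
      \<le> ennreal (Ly\<^sup>2 * (norm (y1 - y2))\<^sup>2)" for x y1 y2
    unfolding f_lam_def Ly_def d_def
    by (rule nn_integral_le_const_AE[OF P eventually_mono[OF sample smoothed_composite.grad_x_lipschitz_in_y]])
  moreover have "(\<integral>\<^sup>+ \<xi>. ennreal ((norm (grad (\<lambda>y. f_lam lam \<phi> h c x1 y \<xi>) y1 - grad (\<lambda>y. f_lam lam \<phi> h c x2 y \<xi>) y2))\<^sup>2) \<partial>M)
      \<le> ennreal (Ly\<^sup>2 * ((norm (x1 - x2))\<^sup>2 + (norm (y1 - y2))\<^sup>2))" for x1 x2 y1 y2
    unfolding f_lam_def Ly_def d_def
    by (rule nn_integral_le_const_AE[OF P eventually_mono[OF sample smoothed_composite.grad_y_lipschitz_in_xy]])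
  ultimately show ?thesis
    unfolding Let_def d_def[symmetric] Lx_def[symmetric] Ly_def[symmetric] by blast
qed

end
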